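(* Let $G$ be a finite simple connected graph and $H$ a connected subgraph of $G$. If $\beta(H)=n(H)-t$ and $d_H(u,v)=d_G(u,v)$ for all pairs of vertices $u,v$ of $H$, then $\beta(G)\le n(G)-t$.
   Context: $n(X)$ denotes the number of vertices of a graph $X$ and $d_X$ its shortest-path distance. For an ordered set $W=\{w_1,\dots,w_k\}$ of vertices of a connected graph $X$, $r(v|W)=(d_X(v,w_1),\dots,d_X(v,w_k))$; $W$ is a resolving set if distinct vertices have distinct vectors $r(\cdot|W)$, and $\beta(X)$, the metric dimension, is the minimum size of a resolving set. *)

theory Defs
  imports Main
begin

type_synonym 'a graph = "'a set \<times> 'a set set"

definition verts :: "'a graph \<Rightarrow> 'a set" where "verts G = fst G"
definition edges :: "'a graph \<Rightarrow> 'a set set" where "edges G = snd G"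

definition finite_simple_graph :: "'a graph \<Rightarrow> bool" where
  "finite_simple_graph G \<longleftrightarrow> finite (verts G) \<and>
     (\<forall>e\<in>edges G. \<exists>u v. e = {u, v} \<and> u \<noteq> v \<and> u \<in> verts G \<and> v \<in> verts G)"

definition nv :: "'a graph \<Rightarrow> nat" where "nv G = card (verts G)"

definition is_walk :: "'a graph \<Rightarrow> 'a list \<Rightarrow> bool" where
  "is_walk G p \<longleftrightarrow> p \<noteq> [] \<and> set p \<subseteq> verts G \<and>
     (\<forall>i < length p - 1. {p ! i, p ! Suc i} \<in> edges G)"

definition walk_betw :: "'a graph \<Rightarrow> 'a \<Rightarrow> 'a list \<Rightarrow> 'a \<Rightarrow> bool" where
  "walk_betw G u p v \<longleftrightarrow> is_walk G p \<and> hd p = u \<and> last p = v"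

definition connected_graph :: "'a graph \<Rightarrow> bool" where
  "connected_graph G \<longleftrightarrow> verts G \<noteq> {} \<and>
     (\<forall>u\<in>verts G. \<forall>v\<in>verts G. \<exists>p. walk_betw G u p v)"

definition dist :: "'a graph \<Rightarrow> 'a \<Rightarrow> 'a \<Rightarrow> nat" where
  "dist G u v = (LEAST n. \<exists>p. walk_betw G u p v \<and> length p = Suc n)"

definition subgraph :: "'a graph \<Rightarrow> 'a graph \<Rightarrow> bool" where
  "subgraph H G \<longleftrightarrow> finite_simple_graph H \<and>
     verts H \<subseteq> verts G \<and> edges H \<subseteq> edges G"

definition resolving_set :: "'a graph \<Rightarrow> 'a set \<Rightarrow> bool" where
  "resolving_set G W \<longleftrightarrow> W \<subseteq> verts G \<and>
     (\<forall>u\<in>verts G. \<forall>v\<in>verts G. (\<forall>w\<in>W. dist G u w = dist G v w) \<longrightarrow> u = v)"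

definition metric_dim :: "'a graph \<Rightarrow> nat" where
  "metric_dim G = (LEAST k. \<exists>W. resolving_set G W \<and> card W = k)"

end

theory Submission
  imports Defs
begin

text \<open>Let \<open>W\<close> be a metric basis of \<open>H\<close>. Because \<open>H\<close> is isometric in \<open>G\<close>,
  \<open>W\<close> still separates any two vertices of \<open>H\<close> in \<open>G\<close>, and a pair involving a vertex
  outside \<open>H\<close> is separated once all such vertices are added to \<open>W\<close> (a vertex is the only
  one at distance 0 from itself). The resulting resolving set of \<open>G\<close> has
  \<open>\<beta>(H) + n(G) - n(H) = n(G) - t\<close> elements.\<close>

lemma dist_self: "u \<in> verts G \<Longrightarrow> dist G u u = 0"
  unfolding dist_def
  by (rule Least_eq_0) (auto intro!: exI[of _ "[u]"] simp: walk_betw_def is_walk_def)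

lemma dist_eq_0_imp_eq:
  assumes "connected_graph G" "u \<in> verts G" "v \<in> verts G" "dist G u v = 0"
  shows "u = v"
proof -
  obtain p where p: "walk_betw G u p v"
    using assms unfolding connected_graph_def by blast
  then have "p \<noteq> []" by (simp add: walk_betw_def is_walk_def)
  with p have "\<exists>n p. walk_betw G u p v \<and> length p = Suc n"
    by (metis length_greater_0_conv Suc_pred)
  from LeastI_ex[OF this] obtain q
    where q: "walk_betw G u q v" "length q = Suc (dist G u v)"
    unfolding dist_def by blast
  then obtain x where "q = [x]" using assms(4) by (cases q) auto
  with q show ?thesis by (auto simp add: walk_betw_def)
qed

lemma dist_eq_dist_self_imp_eq:
  assumes "connected_graph G" "u \<in> verts G" "w \<in> verts G" "dist G u w = dist G w w"
  shows "u = w"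
  using assms dist_eq_0_imp_eq dist_self by metis

lemma resolving_set_verts:
  assumes "connected_graph G"
  shows "resolving_set G (verts G)"
  unfolding resolving_set_def
  using dist_eq_dist_self_imp_eq[OF assms] by blast

lemma metric_dim_le_card:
  "resolving_set G W \<Longrightarrow> metric_dim G \<le> card W"
  unfolding metric_dim_def by (rule Least_le) blast

lemma metric_basis_exists:
  assumes "connected_graph G"
  obtains W where "resolving_set G W" "card W = metric_dim G"
proof -
  have "\<exists>k W. resolving_set G W \<and> card W = k"
    using resolving_set_verts[OF assms] by blast
  from LeastI_ex[OF this] show ?thesis
    using that unfolding metric_dim_def by blast
qed

lemma resolving_set_extend_isometric_subgraph:
  assumes G: "connected_graph G"
    and sub: "verts H \<subseteq> verts G"
    and isometric: "\<forall>u\<in>verts H. \<forall>v\<in>verts H. dist H u v = dist G u v"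
    and W: "resolving_set H W"
  shows "resolving_set G (W \<union> (verts G - verts H))"
  unfolding resolving_set_def
proof (intro conjI ballI impI)
  have WH: "W \<subseteq> verts H" using W by (simp add: resolving_set_def)
  then show "W \<union> (verts G - verts H) \<subseteq> verts G" using sub by blast
  fix u v assume u: "u \<in> verts G" and v: "v \<in> verts G"
    and eq: "\<forall>w\<in>W \<union> (verts G - verts H). dist G u w = dist G v w"
  consider "u \<in> verts H" "v \<in> verts H" | "v \<notin> verts H" | "u \<notin> verts H" by blast
  then show "u = v"
  proof cases
    case 1
    with eq WH isometric have "\<forall>w\<in>W. dist H u w = dist H v w" by auto
    with 1 W show ?thesis unfolding resolving_set_def by blast
  next
    case 2
    with eq v show ?thesis using dist_eq_dist_self_imp_eq[OF G u v] by blast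
  next
    case 3
    with eq u show ?thesis using dist_eq_dist_self_imp_eq[OF G v u] by auto
  qed
qed

lemma card_Un_Diff_superset:
  assumes "finite V" "W \<subseteq> U" "U \<subseteq> V"
  shows "card (W \<union> (V - U)) = card W + (card V - card U)"
proof -
  have "finite W" "finite U" using assms finite_subset by blast+
  moreover have "W \<inter> (V - U) = {}" using assms(2) by blast
  ultimately show ?thesis
    using assms by (simp add: card_Un_disjoint card_Diff_subset)
qed

theorem proposition2p5:
  fixes G H :: "'a graph" and t :: int
  assumes "finite_simple_graph G" and "connected_graph G"
    and "subgraph H G" and "connected_graph H"
    and "int (metric_dim H) = int (nv H) - t"
    and "\<forall>u\<in>verts H. \<forall>v\<in>verts H. dist H u v = dist G u v"
  shows "int (metric_dim G) \<le> int (nv G) - t"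
proof -
  have fin: "finite (verts G)" using assms(1) by (simp add: finite_simple_graph_def)
  have sub: "verts H \<subseteq> verts G" using assms(3) by (simp add: subgraph_def)
  obtain W where W: "resolving_set H W" "card W = metric_dim H"
    using metric_basis_exists[OF assms(4)] .
  have "metric_dim G \<le> card (W \<union> (verts G - verts H))"
    using metric_dim_le_card resolving_set_extend_isometric_subgraph[OF assms(2) sub assms(6) W(1)] .
  also have "\<dots> = metric_dim H + (nv G - nv H)"
    using card_Un_Diff_superset[OF fin _ sub] W unfolding nv_def resolving_set_def by auto
  finally show ?thesis
    using assms(5) card_mono[OF fin sub] unfolding nv_def by linarith
qed

end
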